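(* Every element of $\mathcal{R}$ with small support lies in the commutator subgroup $[\mathcal{R},\mathcal{R}]$.
   Context: $\mathcal{R}$ is the group of rational homeomorphisms of $\{0,1\}^\omega$: those $f$ for which there is a finite asynchronous binary transducer $(S,s_0,t,o)$ ($S$ finite, $t\colon S\times\{0,1\}\to S$, $o\colon S\times\{0,1\}\to\{0,1\}^*$) with $f(\psi)=o(s_0,\psi)$, where for $\sigma_1\sigma_2\cdots$ one sets $s_1=s_0$, $s_{n+1}=t(s_n,\sigma_n)$ and $o(s_0,\sigma_1\sigma_2\cdots)=o(s_1,\sigma_1)o(s_2,\sigma_2)\cdots$. An element $f$ has small support if there is a proper nonempty clopen subset $E\subseteq\{0,1\}^\omega$ such that $f$ is the identity on the complement of $E$. *)

theory Defs
  imports "HOL-Analysis.Analysis" "HOL-Algebra.Generated_Groups"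
begin

type_synonym cantor = "nat \<Rightarrow> bool"

definition cantor_top :: "cantor topology" where
  "cantor_top = product_topology (\<lambda>_. discrete_topology (UNIV :: bool set)) UNIV"

text \<open>Asynchronous binary transducer (S, s0, t, o); states are naturals,
  S a finite set of states.  run gives the state sequence: run 0 = s_1 = s0,
  run (Suc n) = t(run n, psi n).\<close>

fun tr_run :: "(nat \<Rightarrow> bool \<Rightarrow> nat) \<Rightarrow> nat \<Rightarrow> cantor \<Rightarrow> nat \<Rightarrow> nat" where
  "tr_run t s0 psi 0 = s0"
| "tr_run t s0 psi (Suc n) = t (tr_run t s0 psi n) (psi n)"

definition tr_out_prefix ::
  "(nat \<Rightarrow> bool \<Rightarrow> nat) \<Rightarrow> (nat \<Rightarrow> bool \<Rightarrow> bool list) \<Rightarrow> nat \<Rightarrow> cantor \<Rightarrow> nat \<Rightarrow> bool list" where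
  "tr_out_prefix t out s0 psi n = concat (map (\<lambda>i. out (tr_run t s0 psi i) (psi i)) [0..<n])"

text \<open>The transducer (S,s0,t,o) computes f: for every input psi, the infinite
  concatenation o(s0,psi) is an infinite word equal to f psi.\<close>
definition transducer_computes ::
  "nat set \<Rightarrow> nat \<Rightarrow> (nat \<Rightarrow> bool \<Rightarrow> nat) \<Rightarrow> (nat \<Rightarrow> bool \<Rightarrow> bool list) \<Rightarrow> (cantor \<Rightarrow> cantor) \<Rightarrow> bool" where
  "transducer_computes S s0 t out f \<longleftrightarrow>
     finite S \<and> s0 \<in> S \<and> (\<forall>s\<in>S. \<forall>b. t s b \<in> S) \<and>
     (\<forall>psi k. \<exists>n. k < length (tr_out_prefix t out s0 psi n) \<and>
                  tr_out_prefix t out s0 psi n ! k = f psi k)"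

definition rational_homeos :: "(cantor \<Rightarrow> cantor) set" where
  "rational_homeos = {f. homeomorphic_map cantor_top cantor_top f \<and>
      (\<exists>S s0 t out. transducer_computes S s0 t out f)}"

definition RG :: "(cantor \<Rightarrow> cantor) monoid" where
  "RG = \<lparr>carrier = rational_homeos, mult = (\<circ>), one = id\<rparr>"

definition clopen_cantor :: "cantor set \<Rightarrow> bool" where
  "clopen_cantor E \<longleftrightarrow> openin cantor_top E \<and> closedin cantor_top E"

definition small_support :: "(cantor \<Rightarrow> cantor) \<Rightarrow> bool" where
  "small_support f \<longleftrightarrow> (\<exists>E. clopen_cantor E \<and> E \<noteq> {} \<and> E \<noteq> UNIV \<and> (\<forall>x. x \<notin> E \<longrightarrow> f x = x))"

end

theory Submission
  imports Defs
begin

text \<open>A homeomorphism of Cantor space is rational iff it has only finitely many restrictions,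
  the maps x \<mapsto> f(wx) with their common output prefix removed: a transducer can take these
  restrictions as its states. This characterisation shows that the rational homeomorphisms form a
  group. If f has small support, conjugating by prefix flips and a power of the Thompson-type map
  \<tau> (0x \<mapsto> 00x, 10x \<mapsto> 01x, 11x \<mapsto> 1x) moves the support into the cylinder [10]. For such f, the
  swindle \<sigma>, equal to f on [1] and to copies of the restriction of f to [10] on the cylinders
  [0^n 1], is again finite-state and satisfies \<sigma> \<circ> \<tau> = f \<circ> \<tau> \<circ> \<sigma>, so f = [\<sigma>, \<tau>].\<close>

section \<open>Finite words and infinite sequences\<close>

definition prepend :: "bool list \<Rightarrow> cantor \<Rightarrow> cantor" where
  "prepend w x = (\<lambda>i. if i < length w then w ! i else x (i - length w))"

definition sdrop :: "nat \<Rightarrow> cantor \<Rightarrow> cantor" where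
  "sdrop n x = (\<lambda>i. x (i + n))"

definition stake :: "nat \<Rightarrow> cantor \<Rightarrow> bool list" where
  "stake n x = map x [0..<n]"

definition agree :: "nat \<Rightarrow> cantor \<Rightarrow> cantor \<Rightarrow> bool" where
  "agree n x y \<longleftrightarrow> (\<forall>i<n. x i = y i)"

lemma length_stake [simp]: "length (stake n x) = n"
  by (simp add: stake_def)

lemma nth_stake [simp]: "i < n \<Longrightarrow> stake n x ! i = x i"
  by (simp add: stake_def)

lemma stake_Suc: "stake (Suc n) x = stake n x @ [x n]"
  by (simp add: stake_def)

lemma prepend_Nil [simp]: "prepend [] x = x"
  by (simp add: prepend_def)

lemma prepend_Nil_eq_id [simp]: "prepend [] = id"
  by (simp add: fun_eq_iff)

lemma prepend_prepend: "prepend w (prepend v x) = prepend (w @ v) x"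
  by (auto simp: prepend_def nth_append fun_eq_iff)

lemma prepend_comp_prepend: "prepend w \<circ> prepend v = prepend (w @ v)"
  by (simp add: fun_eq_iff prepend_prepend)

lemma prepend_nth_less: "i < length w \<Longrightarrow> prepend w x i = w ! i"
  by (simp add: prepend_def)

lemma prepend_nth_ge: "length w \<le> i \<Longrightarrow> prepend w x i = x (i - length w)"
  by (simp add: prepend_def)

lemma prepend_Cons_0 [simp]: "prepend (b # w) x 0 = b"
  by (simp add: prepend_def)

lemma prepend_Cons_Suc [simp]: "prepend (b # w) x (Suc i) = prepend w x i"
  by (simp add: prepend_def)

lemma sdrop_nth: "sdrop n x i = x (i + n)"
  by (simp add: sdrop_def)

lemma sdrop_sdrop: "sdrop m (sdrop n x) = sdrop (m + n) x"
  by (simp add: sdrop_def add.assoc)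

lemma sdrop_prepend [simp]: "sdrop (length w) (prepend w x) = x"
  by (simp add: sdrop_def prepend_def)

lemma sdrop_prepend_add: "sdrop (length w + n) (prepend w x) = sdrop n x"
  by (simp add: sdrop_def prepend_def)

lemma sdrop_prepend_le: "n \<le> length w \<Longrightarrow> sdrop n (prepend w x) = prepend (drop n w) x"
  by (auto simp: sdrop_def prepend_def fun_eq_iff add.commute)

lemma stake_prepend [simp]: "stake (length w) (prepend w x) = w"
  by (rule nth_equalityI) (auto simp: prepend_def stake_def)

lemma prepend_stake_sdrop [simp]: "prepend (stake n x) (sdrop n x) = x"
  by (simp add: stake_def prepend_def sdrop_def fun_eq_iff)

lemma prepend_head: "prepend [x 0] (sdrop 1 x) = x"
  using prepend_stake_sdrop[of 1 x] by (simp add: stake_def)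

lemma prepend_head2: "prepend [x 0, x 1] (sdrop 2 x) = x"
  using prepend_stake_sdrop[of 2 x] by (simp add: stake_def numeral_2_eq_2)

lemma inj_prepend: "inj (prepend w)"
  by (metis injI sdrop_prepend)

lemma inj_comp_prepend: "inj h \<Longrightarrow> inj (h \<circ> prepend w)"
  using inj_prepend inj_compose by blast

lemma inj_cantor_nonconstant: "inj h \<Longrightarrow> h (\<lambda>_. True) \<noteq> h (\<lambda>_. False)"
  by (metis injD)

lemma agree_refl [simp]: "agree n x x"
  by (simp add: agree_def)

lemma agree_sym: "agree n x y \<Longrightarrow> agree n y x"
  by (simp add: agree_def)

lemma agree_mono: "agree n x y \<Longrightarrow> m \<le> n \<Longrightarrow> agree m x y"
  by (simp add: agree_def)

lemma agree_stake: "agree n x y \<Longrightarrow> stake n x = stake n y"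
  by (simp add: agree_def stake_def)

lemma agree_sdrop: "agree (m + n) x y \<Longrightarrow> agree n (sdrop m x) (sdrop m y)"
  by (simp add: agree_def sdrop_def)

lemma agree_prepend: "agree (length w + n) (prepend w x) (prepend w y) \<longleftrightarrow> agree n x y"
proof
  assume "agree (length w + n) (prepend w x) (prepend w y)"
  then have "prepend w x (length w + i) = prepend w y (length w + i)" if "i < n" for i
    using that unfolding agree_def by simp
  then show "agree n x y"
    unfolding agree_def by (simp add: prepend_def)
qed (auto simp: agree_def prepend_def)

section \<open>The topology of Cantor space\<close>

definition cantor_continuous :: "(cantor \<Rightarrow> cantor) \<Rightarrow> bool" where
  "cantor_continuous f \<longleftrightarrow> (\<forall>x k. \<exists>n. \<forall>y. agree n y x \<longrightarrow> agree k (f y) (f x))"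

lemma topspace_cantor_top [simp]: "topspace cantor_top = UNIV"
  by (simp add: cantor_top_def PiE_def extensional_def)

lemma compact_space_cantor_top: "compact_space cantor_top"
  unfolding cantor_top_def by (simp add: compact_space_product_topology compact_space_discrete_topology)

lemma Hausdorff_space_cantor_top: "Hausdorff_space cantor_top"
  unfolding cantor_top_def by (simp add: Hausdorff_space_product_topology)

lemma PiE_UNIV_eq: "Pi\<^sub>E UNIV U = {x. \<forall>i. x i \<in> U i}"
  by (auto simp: PiE_def Pi_def extensional_def)

lemma openin_cylinder: "openin cantor_top {y. agree n y x}"
proof -
  have "{y. agree n y x} = Pi\<^sub>E UNIV (\<lambda>i. if i < n then {x i} else UNIV)"
    by (auto simp: PiE_UNIV_eq agree_def)
  moreover have "finite {i. (if i < n then {x i} else UNIV) \<noteq> (UNIV::bool set)}"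
    by (rule finite_subset[of _ "{..<n}"]) auto
  ultimately show ?thesis
    unfolding cantor_top_def by (simp add: openin_PiE_gen)
qed

lemma openin_cantor_top_cylinder:
  assumes "openin cantor_top S" "x \<in> S"
  obtains n where "{y. agree n y x} \<subseteq> S"
proof -
  obtain U where U: "finite {i. U i \<noteq> (UNIV::bool set)}" "x \<in> Pi\<^sub>E UNIV U" "Pi\<^sub>E UNIV U \<subseteq> S"
    using assms unfolding cantor_top_def openin_product_topology_alt by fastforce
  obtain n where n: "\<forall>i\<in>{i. U i \<noteq> UNIV}. i < n"
    using U(1) finite_nat_iff_bounded by (metis lessThan_iff subset_eq)
  have "y \<in> Pi\<^sub>E UNIV U" if "agree n y x" for y
  proof -
    have "y i \<in> U i" for i
      using U(2) n that by (cases "i < n") (auto simp: PiE_UNIV_eq agree_def)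
    then show ?thesis by (simp add: PiE_UNIV_eq)
  qed
  then have "{y. agree n y x} \<subseteq> S" using U(3) by blast
  then show ?thesis by (rule that)
qed

lemma continuous_map_cantor_top_iff:
  "continuous_map cantor_top cantor_top f \<longleftrightarrow> cantor_continuous f"
proof
  assume f: "continuous_map cantor_top cantor_top f"
  show "cantor_continuous f"
    unfolding cantor_continuous_def
  proof (intro allI)
    fix x k
    have "openin cantor_top {z. f z \<in> {y. agree k y (f x)}}"
      using openin_continuous_map_preimage[OF f openin_cylinder[of k "f x"]] by simp
    moreover have "x \<in> {z. f z \<in> {y. agree k y (f x)}}" by simp
    ultimately obtain n where "{y. agree n y x} \<subseteq> {z. f z \<in> {y. agree k y (f x)}}"
      by (rule openin_cantor_top_cylinder)
    then show "\<exists>n. \<forall>y. agree n y x \<longrightarrow> agree k (f y) (f x)" by blast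
  qed
next
  assume f: "cantor_continuous f"
  have "continuous_map cantor_top (discrete_topology UNIV) (\<lambda>x. f x k)" for k
  proof -
    have "openin cantor_top {x. f x k \<in> U}" for U
    proof (subst openin_subopen, intro ballI)
      fix x assume "x \<in> {x. f x k \<in> U}"
      obtain n where n: "\<forall>y. agree n y x \<longrightarrow> agree (Suc k) (f y) (f x)"
        using f cantor_continuous_def by blast
      have "{y. agree n y x} \<subseteq> {x. f x k \<in> U}"
      proof
        fix y assume "y \<in> {y. agree n y x}"
        then have "agree (Suc k) (f y) (f x)" using n by blast
        then have "f y k = f x k" unfolding agree_def by blast
        then show "y \<in> {x. f x k \<in> U}" using \<open>x \<in> _\<close> by simp
      qed
      moreover have "x \<in> {y. agree n y x}" by simp
      ultimately show "\<exists>T. openin cantor_top T \<and> x \<in> T \<and> T \<subseteq> {x. f x k \<in> U}"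
        using openin_cylinder[of n x] by blast
    qed
    then show ?thesis unfolding continuous_map by simp
  qed
  then show "continuous_map cantor_top cantor_top f"
    unfolding cantor_top_def by (simp add: continuous_map_componentwise_UNIV)
qed

lemma homeomorphic_map_cantor_top_iff:
  "homeomorphic_map cantor_top cantor_top f \<longleftrightarrow> bij f \<and> cantor_continuous f"
proof
  assume h: "homeomorphic_map cantor_top cantor_top f"
  have "inj f" using homeomorphic_imp_injective_map[OF h] by simp
  moreover have "surj f" using homeomorphic_imp_surjective_map[OF h] by simp
  moreover have "cantor_continuous f"
    using h continuous_map_cantor_top_iff homeomorphic_imp_continuous_map by blast
  ultimately show "bij f \<and> cantor_continuous f" by (simp add: bij_def)
next
  assume "bij f \<and> cantor_continuous f"
  then show "homeomorphic_map cantor_top cantor_top f"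
    by (intro continuous_imp_homeomorphic_map compact_space_cantor_top Hausdorff_space_cantor_top)
       (auto simp: bij_def continuous_map_cantor_top_iff)
qed

lemma cantor_continuous_inv:
  assumes "bij f" "cantor_continuous f"
  shows "cantor_continuous (inv_into UNIV f)"
proof -
  have "homeomorphic_map cantor_top cantor_top f"
    using assms homeomorphic_map_cantor_top_iff by simp
  then obtain g where g: "homeomorphic_maps cantor_top cantor_top f g"
    using homeomorphic_map_maps by blast
  have "g = inv_into UNIV f"
  proof
    fix y
    have "f (g y) = y" using g unfolding homeomorphic_maps_def by simp
    then show "g y = inv_into UNIV f y" using assms(1) by (metis bij_inv_eq_iff)
  qed
  moreover have "continuous_map cantor_top cantor_top g"
    using g unfolding homeomorphic_maps_def by simp
  ultimately show ?thesis using continuous_map_cantor_top_iff by simp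
qed

lemma cantor_continuous_uniform:
  assumes "cantor_continuous f"
  obtains n where "\<And>x y. agree n y x \<Longrightarrow> agree k (f y) (f x)"
proof -
  have "\<forall>x. \<exists>n. \<forall>y. agree n y x \<longrightarrow> agree k (f y) (f x)"
    using assms unfolding cantor_continuous_def by blast
  then obtain N where N: "\<And>x y. agree (N x) y x \<Longrightarrow> agree k (f y) (f x)"
    using choice[of "\<lambda>x n. \<forall>y. agree n y x \<longrightarrow> agree k (f y) (f x)"] by blast
  let ?U = "(\<lambda>x. {y. agree (N x) y x}) ` UNIV"
  have op: "\<forall>U\<in>?U. openin cantor_top U" using openin_cylinder by auto
  have cov: "topspace cantor_top \<subseteq> \<Union>?U" by (auto simp: agree_def)
  have "\<forall>\<U>. (\<forall>U \<in> \<U>. openin cantor_top U) \<and> topspace cantor_top \<subseteq> \<Union>\<U>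
          \<longrightarrow> (\<exists>\<F>. finite \<F> \<and> \<F> \<subseteq> \<U> \<and> topspace cantor_top \<subseteq> \<Union>\<F>)"
    using compact_space_cantor_top unfolding compact_space_alt by assumption
  then have "\<exists>\<F>. finite \<F> \<and> \<F> \<subseteq> ?U \<and> topspace cantor_top \<subseteq> \<Union>\<F>"
    using op cov by blast
  then obtain \<F> where \<F>: "finite \<F>" "\<F> \<subseteq> ?U" "UNIV \<subseteq> \<Union>\<F>"
    by auto
  obtain X where X: "finite X" "\<F> = (\<lambda>x. {y. agree (N x) y x}) ` X"
    using finite_subset_image[OF \<F>(1,2)] by blast
  define M where "M = Max (insert 0 (N ` X))"
  have M: "z \<in> X \<Longrightarrow> N z \<le> M" for z
    unfolding M_def using X(1) by auto
  have "agree k (f y) (f x)" if "agree M y x" for x y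
  proof -
    obtain z where z: "z \<in> X" "agree (N z) x z" using \<F>(3) X(2) by blast
    have "N z \<le> M" using M z by blast
    then have "agree (N z) y z" using that z(2) unfolding agree_def by auto
    then have "agree k (f y) (f z)" "agree k (f x) (f z)"
      using N z(2) by blast+
    then show ?thesis
      unfolding agree_def by simp
  qed
  then show ?thesis using that by blast
qed

lemma cantor_continuous_comp:
  "cantor_continuous f \<Longrightarrow> cantor_continuous g \<Longrightarrow> cantor_continuous (f \<circ> g)"
  unfolding cantor_continuous_def comp_def by metis

lemma cantor_continuous_sdrop: "cantor_continuous (sdrop n)"
  unfolding cantor_continuous_def
proof (intro allI exI impI)
  fix x k y assume "agree (n + k) y x"
  then show "agree k (sdrop n y) (sdrop n x)" by (rule agree_sdrop)
qed

lemma cantor_continuous_prepend: "cantor_continuous (prepend c)"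
  unfolding cantor_continuous_def
proof (intro allI exI impI)
  fix x k y assume "agree k y x"
  then have "agree (length c + k) (prepend c y) (prepend c x)" using agree_prepend by blast
  then show "agree k (prepend c y) (prepend c x)" by (rule agree_mono) simp
qed

lemma cantor_continuous_local:
  assumes "\<And>x. \<exists>n0 h. cantor_continuous h \<and> (\<forall>y. agree n0 y x \<longrightarrow> f y = h y)"
  shows "cantor_continuous f"
  unfolding cantor_continuous_def
proof (intro allI)
  fix x k
  obtain n0 h where h: "cantor_continuous h" "\<forall>y. agree n0 y x \<longrightarrow> f y = h y" using assms by blast
  obtain n1 where n1: "\<forall>y. agree n1 y x \<longrightarrow> agree k (h y) (h x)"
    using h(1) unfolding cantor_continuous_def by blast
  show "\<exists>n. \<forall>y. agree n y x \<longrightarrow> agree k (f y) (f x)"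
  proof (intro exI allI impI)
    fix y assume "agree (max n0 n1) y x"
    then have "agree n0 y x" "agree n1 y x" using agree_mono by fastforce+
    then show "agree k (f y) (f x)" using h(2) n1 by simp
  qed
qed

section \<open>Restrictions and finite-state maps\<close>

definition common_prefix_length :: "(cantor \<Rightarrow> cantor) \<Rightarrow> nat" where
  "common_prefix_length h = (GREATEST n. \<forall>x y. agree n (h x) (h y))"

definition common_prefix :: "(cantor \<Rightarrow> cantor) \<Rightarrow> bool list" where
  "common_prefix h = stake (common_prefix_length h) (h undefined)"

definition strip_prefix :: "(cantor \<Rightarrow> cantor) \<Rightarrow> cantor \<Rightarrow> cantor" where
  "strip_prefix h = (\<lambda>x. sdrop (common_prefix_length h) (h x))"

definition restrictions :: "(cantor \<Rightarrow> cantor) \<Rightarrow> (cantor \<Rightarrow> cantor) set" where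
  "restrictions f = range (\<lambda>w. strip_prefix (f \<circ> prepend w))"

definition finite_state :: "(cantor \<Rightarrow> cantor) \<Rightarrow> bool" where
  "finite_state f \<longleftrightarrow> finite (restrictions f)"

lemma
  assumes "inj h"
  shows agree_common_prefix_length: "agree (common_prefix_length h) (h x) (h y)"
    and common_prefix_length_greatest: "(\<And>x y. agree n (h x) (h y)) \<Longrightarrow> n \<le> common_prefix_length h"
proof -
  obtain i where i: "h (\<lambda>_. True) i \<noteq> h (\<lambda>_. False) i"
    using inj_cantor_nonconstant[OF assms] by auto
  let ?P = "\<lambda>n. \<forall>x y. agree n (h x) (h y)"
  have bound: "?P n \<Longrightarrow> n \<le> i" for n
    using i unfolding agree_def by (meson not_le)
  have "?P 0" by (simp add: agree_def)
  then show "agree (common_prefix_length h) (h x) (h y)"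
    unfolding common_prefix_length_def using GreatestI_nat[of ?P 0 i] bound by blast
  show "(\<And>x y. agree n (h x) (h y)) \<Longrightarrow> n \<le> common_prefix_length h"
    unfolding common_prefix_length_def using Greatest_le_nat[of ?P n i] bound by blast
qed

lemma common_prefix_length_differ:
  assumes "inj h"
  obtains x y where "h x (common_prefix_length h) \<noteq> h y (common_prefix_length h)"
proof -
  let ?l = "common_prefix_length h"
  have "\<not> Suc ?l \<le> ?l" by simp
  then obtain x y where "\<not> agree (Suc ?l) (h x) (h y)"
    using common_prefix_length_greatest[OF assms, of "Suc ?l"] by blast
  then have "h x ?l \<noteq> h y ?l"
    using agree_common_prefix_length[OF assms, of x y] unfolding agree_def by (metis less_Suc_eq)
  then show ?thesis by (rule that)
qed

lemma length_common_prefix [simp]: "length (common_prefix h) = common_prefix_length h"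
  by (simp add: common_prefix_def)

lemma common_prefix_decomp:
  assumes "inj h"
  shows "h x = prepend (common_prefix h) (strip_prefix h x)"
proof -
  have "agree (common_prefix_length h) (h x) (h undefined)"
    using agree_common_prefix_length[OF assms] .
  then have "stake (common_prefix_length h) (h undefined) = stake (common_prefix_length h) (h x)"
    by (simp add: agree_stake)
  then show ?thesis unfolding common_prefix_def strip_prefix_def by simp
qed

lemma common_prefix_decomp': "inj h \<Longrightarrow> h = prepend (common_prefix h) \<circ> strip_prefix h"
  using common_prefix_decomp by (auto simp: fun_eq_iff)

lemma inj_strip_prefix: "inj h \<Longrightarrow> inj (strip_prefix h)"
  by (metis common_prefix_decomp injD injI)

lemma common_prefix_length_prepend_comp:
  assumes h: "inj h"
  shows "common_prefix_length (prepend c \<circ> h) = length c + common_prefix_length h"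
proof (rule antisym)
  have ch: "inj (prepend c \<circ> h)" using inj_prepend h by (rule inj_compose)
  show "length c + common_prefix_length h \<le> common_prefix_length (prepend c \<circ> h)"
    by (rule common_prefix_length_greatest[OF ch])
      (simp add: agree_prepend agree_common_prefix_length[OF h])
  let ?l = "common_prefix_length (prepend c \<circ> h)"
  obtain x y where "prepend c (h x) ?l \<noteq> prepend c (h y) ?l"
    using common_prefix_length_differ[OF ch] by auto
  then have ge: "length c \<le> ?l"
    by (metis not_le prepend_nth_less)
  have "agree (length c + (?l - length c)) (prepend c (h x)) (prepend c (h y))" for x y
    using agree_common_prefix_length[OF ch, of x y] ge by simp
  then have "?l - length c \<le> common_prefix_length h"
    using common_prefix_length_greatest[OF h] agree_prepend by blast
  then show "?l \<le> length c + common_prefix_length h" by simp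
qed

lemma strip_prefix_prepend_comp: "inj h \<Longrightarrow> strip_prefix (prepend c \<circ> h) = strip_prefix h"
  unfolding strip_prefix_def by (simp add: common_prefix_length_prepend_comp fun_eq_iff sdrop_prepend_add)

lemma common_prefix_length_strip_prefix:
  assumes "inj h"
  shows "common_prefix_length (strip_prefix h) = 0"
proof -
  have "common_prefix_length h = common_prefix_length (prepend (common_prefix h) \<circ> strip_prefix h)"
    using common_prefix_decomp'[OF assms] by simp
  also have "\<dots> = common_prefix_length h + common_prefix_length (strip_prefix h)"
    using common_prefix_length_prepend_comp[OF inj_strip_prefix[OF assms]] by simp
  finally show ?thesis by simp
qed

lemma strip_prefix_first_bit_differs:
  assumes "inj h"
  obtains x y where "strip_prefix h x 0 \<noteq> strip_prefix h y 0"
  using common_prefix_length_differ[OF inj_strip_prefix[OF assms]]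
    common_prefix_length_strip_prefix[OF assms] by metis

lemma strip_prefix_id [simp]: "strip_prefix id = id"
proof -
  have "\<not> agree 1 (\<lambda>_. True) (\<lambda>_. False)" by (simp add: agree_def)
  then have "common_prefix_length id = 0"
    using agree_common_prefix_length[of id "\<lambda>_. True" "\<lambda>_. False"] inj_on_id
    by (metis One_nat_def agree_mono id_apply less_one not_le)
  then show ?thesis by (simp add: strip_prefix_def fun_eq_iff sdrop_def)
qed

lemma strip_prefix_prepend [simp]: "strip_prefix (prepend c) = id"
  using strip_prefix_prepend_comp[of id c] by simp

lemma strip_prefix_comp_prepend_strip:
  assumes "inj h"
  shows "strip_prefix (strip_prefix h \<circ> prepend w) = strip_prefix (h \<circ> prepend w)"
proof -
  have "h \<circ> prepend w = prepend (common_prefix h) \<circ> (strip_prefix h \<circ> prepend w)"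
    using common_prefix_decomp'[OF assms] by (metis comp_assoc)
  then show ?thesis
    using strip_prefix_prepend_comp inj_comp_prepend[OF inj_strip_prefix[OF assms]] by metis
qed

lemma finite_stateI:
  "(\<And>w. strip_prefix (f \<circ> prepend w) \<in> T) \<Longrightarrow> finite T \<Longrightarrow> finite_state f"
  unfolding finite_state_def restrictions_def by (meson finite_subset image_subsetI)

lemma finite_state_id: "finite_state id"
  by (rule finite_stateI[of _ "{id}"]) auto

lemma restrictions_comp:
  assumes f: "inj f" and g: "inj g"
  shows "restrictions (f \<circ> g) \<subseteq> (\<lambda>(a, b). strip_prefix (a \<circ> b)) ` (restrictions f \<times> restrictions g)"
proof
  fix r assume "r \<in> restrictions (f \<circ> g)"
  then obtain w where r: "r = strip_prefix (f \<circ> g \<circ> prepend w)"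
    unfolding restrictions_def by auto
  define G where "G = g \<circ> prepend w"
  have iG: "inj G" unfolding G_def using inj_comp_prepend[OF g] .
  define F where "F = f \<circ> prepend (common_prefix G)"
  have iF: "inj F" unfolding F_def using inj_comp_prepend[OF f] .
  have "f \<circ> g \<circ> prepend w = prepend (common_prefix F) \<circ> (strip_prefix F \<circ> strip_prefix G)"
    using common_prefix_decomp'[OF iG] common_prefix_decomp'[OF iF]
    unfolding G_def F_def by (metis comp_assoc)
  moreover have "inj (strip_prefix F \<circ> strip_prefix G)"
    using inj_strip_prefix[OF iF] inj_strip_prefix[OF iG] by (rule inj_compose)
  ultimately have "r = strip_prefix (strip_prefix F \<circ> strip_prefix G)"
    using r strip_prefix_prepend_comp by metis
  moreover have "strip_prefix F \<in> restrictions f"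
    unfolding F_def restrictions_def by auto
  moreover have "strip_prefix G \<in> restrictions g"
    unfolding G_def restrictions_def by auto
  ultimately show "r \<in> (\<lambda>(a, b). strip_prefix (a \<circ> b)) ` (restrictions f \<times> restrictions g)"
    by force
qed

lemma finite_state_comp:
  "inj f \<Longrightarrow> inj g \<Longrightarrow> finite_state f \<Longrightarrow> finite_state g \<Longrightarrow> finite_state (f \<circ> g)"
  unfolding finite_state_def using restrictions_comp by (meson finite_SigmaI finite_imageI finite_subset)

lemma inj_restriction: "inj f \<Longrightarrow> h \<in> restrictions f \<Longrightarrow> inj h"
  unfolding restrictions_def using inj_strip_prefix inj_comp_prepend by blast

lemma restriction_separates_first_bit:
  assumes f: "bij f" "cantor_continuous f" and h: "h \<in> restrictions f"
  obtains N where "\<And>x y. x 0 \<noteq> y 0 \<Longrightarrow> \<not> agree N (h x) (h y)"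
proof -
  define g where "g = inv_into UNIV f"
  obtain p where hp: "h = strip_prefix (f \<circ> prepend p)"
    using h unfolding restrictions_def by auto
  define F where "F = f \<circ> prepend p"
  have iF: "inj F" unfolding F_def using inj_comp_prepend bij_is_inj[OF f(1)] by blast
  have F: "F x = prepend (common_prefix F) (h x)" for x
    unfolding hp F_def[symmetric] using common_prefix_decomp[OF iF] .
  obtain M where M: "\<And>x y. agree M y x \<Longrightarrow> agree (Suc (length p)) (g y) (g x)"
    using cantor_continuous_uniform[OF cantor_continuous_inv[OF f]] unfolding g_def by blast
  have "\<not> agree M (h x) (h y)" if "x 0 \<noteq> y 0" for x y
  proof
    assume "agree M (h x) (h y)"
    then have "agree (length (common_prefix F) + M) (F x) (F y)"
      using F agree_prepend by metis
    then have "agree M (F x) (F y)" by (rule agree_mono) simp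
    then have "agree (Suc (length p)) (g (F x)) (g (F y))" using M agree_sym by blast
    then have "agree (Suc (length p)) (prepend p x) (prepend p y)"
      unfolding F_def g_def using bij_is_inj[OF f(1)] by simp
    then have "prepend p x (length p) = prepend p y (length p)" unfolding agree_def by simp
    then show False using that by (simp add: prepend_def)
  qed
  then show ?thesis by (rule that)
qed

lemma restriction_of_inv:
  assumes f: "bij f"
  obtains h v where "h \<in> restrictions f"
    and "\<And>x. h (strip_prefix (inv_into UNIV f \<circ> prepend w) x) = prepend v x"
proof -
  have fi: "inj f" using f bij_is_inj by blast
  have fg: "f (inv_into UNIV f x) = x" for x using f by (simp add: bij_is_surj surj_f_inv_f)
  define G where "G = inv_into UNIV f \<circ> prepend w"
  have iG: "inj G" unfolding G_def using inj_comp_prepend bij_is_inj[OF bij_imp_bij_inv[OF f]] by blast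
  define F where "F = f \<circ> prepend (common_prefix G)"
  have iF: "inj F" unfolding F_def using inj_comp_prepend[OF fi] .
  define d where "d = common_prefix F"
  define h where "h = strip_prefix F"
  have key: "prepend w x = prepend d (h (strip_prefix G x))" for x
  proof -
    have "prepend w x = f (G x)" unfolding G_def by (simp add: fg)
    also have "\<dots> = F (strip_prefix G x)" unfolding F_def using common_prefix_decomp[OF iG] by simp
    finally show ?thesis using common_prefix_decomp[OF iF] unfolding d_def h_def by simp
  qed
  have "length d \<le> length w"
  proof (rule ccontr)
    assume "\<not> length d \<le> length w"
    then have "prepend w (\<lambda>_. True) (length w) = d ! length w"
      "prepend w (\<lambda>_. False) (length w) = d ! length w"
      using key by (metis not_le prepend_nth_less)+
    then show False by (simp add: prepend_def)
  qed
  then have "h (strip_prefix G x) = prepend (drop (length d) w) x" for x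
    using key[of x] sdrop_prepend_le[of "length d" w x] by simp
  moreover have "h \<in> restrictions f" unfolding h_def F_def restrictions_def by auto
  ultimately show ?thesis using that unfolding G_def by blast
qed

lemma finite_state_inv:
  assumes f: "bij f" "cantor_continuous f" and fs: "finite_state f"
  shows "finite_state (inv_into UNIV f)"
proof -
  have fi: "inj f" using f bij_is_inj by blast
  have "\<forall>h\<in>restrictions f. \<exists>N. \<forall>x y. x 0 \<noteq> y 0 \<longrightarrow> \<not> agree N (h x) (h y)"
    by (metis restriction_separates_first_bit[OF f])
  then obtain N where N: "\<And>h x y. h \<in> restrictions f \<Longrightarrow> x 0 \<noteq> y 0 \<Longrightarrow> \<not> agree (N h) (h x) (h y)"
    by metis
  define T where "T = (\<Union>h\<in>restrictions f.
    (\<lambda>v. \<lambda>x. inv_into UNIV h (prepend v x)) ` {v. length v \<le> N h})"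
  show ?thesis
  proof (rule finite_stateI)
    show "finite T"
      unfolding T_def using fs unfolding finite_state_def
      by (intro finite_UN_I finite_imageI) (simp_all add: finite_lists_length_le[of UNIV, simplified])
    fix w
    define r where "r = strip_prefix (inv_into UNIV f \<circ> prepend w)"
    obtain h v where h: "h \<in> restrictions f" and hr: "\<And>x. h (r x) = prepend v x"
      using restriction_of_inv[OF f(1)] unfolding r_def by metis
    have "inj h" using inj_restriction[OF fi h] .
    then have r: "r = (\<lambda>x. inv_into UNIV h (prepend v x))"
      using hr by (metis inv_f_f ext)
    have "inj (inv_into UNIV f \<circ> prepend w)"
      using inj_comp_prepend bij_is_inj[OF bij_imp_bij_inv[OF f(1)]] by blast
    then obtain x y where xy: "r x 0 \<noteq> r y 0"
      using strip_prefix_first_bit_differs unfolding r_def by blast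
    have "length v < N h"
    proof (rule ccontr)
      assume "\<not> length v < N h"
      then have "agree (N h) (h (r x)) (h (r y))"
        unfolding hr agree_def by (simp add: prepend_def)
      then show False using N[of h "r x" "r y"] h xy by blast
    qed
    then show "strip_prefix (inv_into UNIV f \<circ> prepend w) \<in> T"
      unfolding r_def[symmetric] T_def r using h by (intro UN_I[OF h] image_eqI[of _ _ v]) auto
  qed
qed

section \<open>Transducers compute exactly the finite-state maps\<close>

lemma tr_out_prefix_0 [simp]: "tr_out_prefix t out s0 x 0 = []"
  by (simp add: tr_out_prefix_def)

lemma tr_out_prefix_Suc:
  "tr_out_prefix t out s0 x (Suc n) = tr_out_prefix t out s0 x n @ out (tr_run t s0 x n) (x n)"
  by (simp add: tr_out_prefix_def)

lemma tr_out_prefix_extends: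
  "m \<le> n \<Longrightarrow> \<exists>r. tr_out_prefix t out s0 x n = tr_out_prefix t out s0 x m @ r"
proof (induction n)
  case (Suc n)
  then show ?case
    by (cases "m = Suc n") (auto simp: tr_out_prefix_Suc)
qed simp

lemma tr_out_prefix_nth_eq:
  assumes "k < length (tr_out_prefix t out s0 x m)" "k < length (tr_out_prefix t out s0 x n)"
  shows "tr_out_prefix t out s0 x m ! k = tr_out_prefix t out s0 x n ! k"
proof (cases "m \<le> n")
  case True
  then obtain r where "tr_out_prefix t out s0 x n = tr_out_prefix t out s0 x m @ r"
    using tr_out_prefix_extends by blast
  then show ?thesis using assms by (simp add: nth_append)
next
  case False
  then obtain r where "tr_out_prefix t out s0 x m = tr_out_prefix t out s0 x n @ r"
    using tr_out_prefix_extends by (metis nat_le_linear)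
  then show ?thesis using assms by (simp add: nth_append)
qed

lemma tr_run_prepend_indep:
  "k \<le> length w \<Longrightarrow> tr_run t s0 (prepend w x) k = tr_run t s0 (prepend w y) k"
  by (induction k) (auto simp: prepend_def)

lemma tr_out_prefix_prepend_indep:
  "k \<le> length w \<Longrightarrow> tr_out_prefix t out s0 (prepend w x) k = tr_out_prefix t out s0 (prepend w y) k"
proof (induction k)
  case (Suc k)
  then have "tr_run t s0 (prepend w x) k = tr_run t s0 (prepend w y) k"
    using tr_run_prepend_indep by simp
  moreover have "prepend w x k = prepend w y k" using Suc.prems by (simp add: prepend_def)
  ultimately show ?case using Suc by (simp add: tr_out_prefix_Suc)
qed simp

lemma tr_run_prepend:
  "tr_run t s0 (prepend w x) (length w + n) = tr_run t (tr_run t s0 (prepend w x) (length w)) x n"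
  by (induction n) (auto simp: prepend_def)

lemma tr_out_prefix_prepend:
  "tr_out_prefix t out s0 (prepend w x) (length w + n) =
   tr_out_prefix t out s0 (prepend w x) (length w) @ tr_out_prefix t out (tr_run t s0 (prepend w x) (length w)) x n"
proof (induction n)
  case (Suc n)
  have "prepend w x (length w + n) = x n" by (simp add: prepend_def)
  then show ?case using Suc by (simp add: tr_out_prefix_Suc tr_run_prepend)
qed simp

lemma tr_run_in_states: "s0 \<in> S \<Longrightarrow> \<forall>s\<in>S. \<forall>b. t s b \<in> S \<Longrightarrow> tr_run t s0 x n \<in> S"
  by (induction n) auto

definition tr_output ::
  "(nat \<Rightarrow> bool \<Rightarrow> nat) \<Rightarrow> (nat \<Rightarrow> bool \<Rightarrow> bool list) \<Rightarrow> nat \<Rightarrow> cantor \<Rightarrow> cantor" where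
  "tr_output t out s x = (\<lambda>k. tr_out_prefix t out s x (LEAST n. k < length (tr_out_prefix t out s x n)) ! k)"

lemma transducer_computes_nth:
  assumes "transducer_computes S s0 t out f" "k < length (tr_out_prefix t out s0 x n)"
  shows "tr_out_prefix t out s0 x n ! k = f x k"
proof -
  obtain m where "k < length (tr_out_prefix t out s0 x m)" "tr_out_prefix t out s0 x m ! k = f x k"
    using assms(1) unfolding transducer_computes_def by blast
  then show ?thesis using tr_out_prefix_nth_eq assms(2) by metis
qed

lemma transducer_computes_prepend:
  assumes c: "transducer_computes S s0 t out f"
  shows "f (prepend w x) = prepend (tr_out_prefix t out s0 (prepend w x) (length w))
           (tr_output t out (tr_run t s0 (prepend w x) (length w)) x)"
    (is "_ = prepend ?o (tr_output t out ?s x)")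
proof
  fix i
  show "f (prepend w x) i = prepend ?o (tr_output t out ?s x) i"
  proof (cases "i < length ?o")
    case True
    then show ?thesis using transducer_computes_nth[OF c True] by (simp add: prepend_nth_less)
  next
    case False
    define k where "k = i - length ?o"
    have i: "i = length ?o + k" using False k_def by simp
    obtain m where m: "i < length (tr_out_prefix t out s0 (prepend w x) m)"
      using c unfolding transducer_computes_def by blast
    have "length w \<le> m"
    proof (rule ccontr)
      assume "\<not> length w \<le> m"
      then obtain r where "?o = tr_out_prefix t out s0 (prepend w x) m @ r"
        using tr_out_prefix_extends by (metis nat_le_linear)
      then show False using m False by simp
    qed
    then obtain n where n: "m = length w + n" using le_Suc_ex by blast
    have kn: "k < length (tr_out_prefix t out ?s x n)"
      using m unfolding n tr_out_prefix_prepend i by simp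
    define n0 where "n0 = (LEAST n. k < length (tr_out_prefix t out ?s x n))"
    have n0: "k < length (tr_out_prefix t out ?s x n0)" unfolding n0_def using kn by (rule LeastI)
    have "tr_output t out ?s x k = tr_out_prefix t out ?s x n0 ! k"
      unfolding tr_output_def n0_def ..
    also have "\<dots> = tr_out_prefix t out ?s x n ! k" using tr_out_prefix_nth_eq[OF n0 kn] .
    also have "\<dots> = f (prepend w x) i"
      using transducer_computes_nth[OF c m] unfolding n tr_out_prefix_prepend i by (simp add: nth_append)
    finally show ?thesis unfolding i by (simp add: prepend_nth_ge)
  qed
qed

lemma transducer_imp_finite_state:
  assumes c: "transducer_computes S s0 t out f" and fi: "inj f"
  shows "finite_state f"
proof (rule finite_stateI)
  show "finite ((\<lambda>s. strip_prefix (tr_output t out s)) ` S)"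
    using c unfolding transducer_computes_def by simp
  fix w
  define z :: cantor where "z = (\<lambda>_. False)"
  define o' where "o' = tr_out_prefix t out s0 (prepend w z) (length w)"
  define s where "s = tr_run t s0 (prepend w z) (length w)"
  have "f (prepend w x) = prepend o' (tr_output t out s x)" for x
    using transducer_computes_prepend[OF c, of w x] tr_out_prefix_prepend_indep[of "length w" w t out s0 x z]
      tr_run_prepend_indep[of "length w" w t s0 x z]
    unfolding o'_def s_def by simp
  then have fw: "f \<circ> prepend w = prepend o' \<circ> tr_output t out s"
    by (simp add: fun_eq_iff)
  have "inj (prepend o' \<circ> tr_output t out s)"
    unfolding fw[symmetric] using inj_comp_prepend[OF fi] .
  then have "inj (tr_output t out s)"
    by (rule inj_on_imageI2)
  then have "strip_prefix (f \<circ> prepend w) = strip_prefix (tr_output t out s)"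
    unfolding fw by (rule strip_prefix_prepend_comp)
  moreover have "s \<in> S"
    unfolding s_def using c unfolding transducer_computes_def by (meson tr_run_in_states)
  ultimately show "strip_prefix (f \<circ> prepend w) \<in> (\<lambda>s. strip_prefix (tr_output t out s)) ` S"
    by blast
qed

definition states :: "(cantor \<Rightarrow> cantor) \<Rightarrow> (cantor \<Rightarrow> cantor) set" where
  "states f = insert f (restrictions f)"

text \<open>The initial state is f itself, not its restriction at the empty word: a transducer emits
  no output before reading.\<close>

definition state_after :: "(cantor \<Rightarrow> cantor) \<Rightarrow> bool list \<Rightarrow> cantor \<Rightarrow> cantor" where
  "state_after f w = (if w = [] then f else strip_prefix (f \<circ> prepend w))"

lemma inj_state_after: "inj f \<Longrightarrow> inj (state_after f w)"
  unfolding state_after_def using inj_strip_prefix inj_comp_prepend by auto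

lemma state_after_in_states: "state_after f w \<in> states f"
  unfolding state_after_def states_def restrictions_def by auto

lemma state_after_snoc:
  assumes "inj f"
  shows "strip_prefix (state_after f w \<circ> prepend [b]) = state_after f (w @ [b])"
proof (cases "w = []")
  case False
  then have "strip_prefix (state_after f w \<circ> prepend [b]) = strip_prefix (f \<circ> prepend w \<circ> prepend [b])"
    unfolding state_after_def using strip_prefix_comp_prepend_strip[OF inj_comp_prepend[OF assms]] by simp
  then show ?thesis unfolding state_after_def by (simp add: comp_assoc prepend_comp_prepend)
qed (simp add: state_after_def)

lemma strip_prefix_state_comp_in_states:
  assumes "inj f" "h \<in> states f"
  shows "strip_prefix (h \<circ> prepend [b]) \<in> states f"
proof (cases "h = f")
  case False
  then obtain w where "h = strip_prefix (f \<circ> prepend w)"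
    using assms(2) unfolding states_def restrictions_def by auto
  then have "strip_prefix (h \<circ> prepend [b]) = strip_prefix (f \<circ> prepend (w @ [b]))"
    using strip_prefix_comp_prepend_strip[OF inj_comp_prepend[OF assms(1)]]
    by (simp add: comp_assoc prepend_comp_prepend)
  then show ?thesis unfolding states_def restrictions_def by auto
qed (auto simp: states_def restrictions_def)

definition restriction_step ::
  "(cantor \<Rightarrow> cantor) set \<Rightarrow> ((cantor \<Rightarrow> cantor) \<Rightarrow> nat) \<Rightarrow> nat \<Rightarrow> bool \<Rightarrow> nat" where
  "restriction_step H e s b = e (strip_prefix (inv_into H e s \<circ> prepend [b]))"

definition restriction_out ::
  "(cantor \<Rightarrow> cantor) set \<Rightarrow> ((cantor \<Rightarrow> cantor) \<Rightarrow> nat) \<Rightarrow> nat \<Rightarrow> bool \<Rightarrow> bool list" where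
  "restriction_out H e s b = common_prefix (inv_into H e s \<circ> prepend [b])"

context
  fixes f :: "cantor \<Rightarrow> cantor" and e :: "(cantor \<Rightarrow> cantor) \<Rightarrow> nat"
  assumes inj_f: "inj f" and inj_e: "inj_on e (states f)"
begin

lemma tr_run_restriction_step:
  "tr_run (restriction_step (states f) e) (e f) x n = e (state_after f (stake n x))"
proof (induction n)
  case 0
  then show ?case by (simp add: state_after_def stake_def)
next
  case (Suc n)
  have "tr_run (restriction_step (states f) e) (e f) x (Suc n)
      = restriction_step (states f) e (e (state_after f (stake n x))) (x n)"
    using Suc.IH by simp
  also have "\<dots> = e (strip_prefix (state_after f (stake n x) \<circ> prepend [x n]))"
    by (simp add: restriction_step_def inv_into_f_f[OF inj_e state_after_in_states])
  finally show ?case using state_after_snoc[OF inj_f] by (simp add: stake_Suc)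
qed

lemma tr_out_prefix_restriction_out:
  "f (prepend (stake n x) y) =
   prepend (tr_out_prefix (restriction_step (states f) e) (restriction_out (states f) e) (e f) x n)
     (state_after f (stake n x) y)"
proof (induction n arbitrary: y)
  case 0
  then show ?case by (simp add: state_after_def stake_def)
next
  case (Suc n)
  define h where "h = state_after f (stake n x)"
  have h: "inj (h \<circ> prepend [x n])"
    unfolding h_def using inj_comp_prepend[OF inj_state_after[OF inj_f]] .
  have out: "restriction_out (states f) e (tr_run (restriction_step (states f) e) (e f) x n) (x n)
      = common_prefix (h \<circ> prepend [x n])"
    unfolding restriction_out_def tr_run_restriction_step h_def
    by (simp add: inv_into_f_f[OF inj_e state_after_in_states])
  have "f (prepend (stake (Suc n) x) y) = f (prepend (stake n x) (prepend [x n] y))"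
    by (simp add: stake_Suc prepend_prepend)
  also have "\<dots> = prepend (tr_out_prefix (restriction_step (states f) e) (restriction_out (states f) e) (e f) x n)
      (prepend (common_prefix (h \<circ> prepend [x n])) (strip_prefix (h \<circ> prepend [x n]) y))"
    using Suc common_prefix_decomp[OF h, of y] unfolding h_def by simp
  also have "\<dots> = prepend (tr_out_prefix (restriction_step (states f) e) (restriction_out (states f) e) (e f) x (Suc n))
      (state_after f (stake (Suc n) x) y)"
    using state_after_snoc[OF inj_f] unfolding tr_out_prefix_Suc out h_def
    by (simp add: prepend_prepend stake_Suc)
  finally show ?case .
qed

lemma restriction_step_closed:
  "s \<in> e ` states f \<Longrightarrow> restriction_step (states f) e s b \<in> e ` states f"
  unfolding restriction_step_def using inj_e strip_prefix_state_comp_in_states[OF inj_f] by auto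

end

lemma common_prefix_length_unbounded:
  assumes f: "inj f" "cantor_continuous f"
  obtains n where "k < common_prefix_length (f \<circ> prepend (stake (Suc n) x))"
proof -
  obtain n where n: "\<forall>y. agree n y x \<longrightarrow> agree (Suc k) (f y) (f x)"
    using f(2) unfolding cantor_continuous_def by blast
  have "Suc k \<le> common_prefix_length (f \<circ> prepend (stake (Suc n) x))"
  proof (rule common_prefix_length_greatest[OF inj_comp_prepend[OF f(1)]])
    fix y z
    have "agree n (prepend (stake (Suc n) x) y) x" "agree n (prepend (stake (Suc n) x) z) x"
      unfolding agree_def by (simp_all add: prepend_nth_less stake_def nth_append)
    then have "agree (Suc k) (f (prepend (stake (Suc n) x) y)) (f x)"
      "agree (Suc k) (f (prepend (stake (Suc n) x) z)) (f x)"
      using n by blast+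
    then show "agree (Suc k) ((f \<circ> prepend (stake (Suc n) x)) y) ((f \<circ> prepend (stake (Suc n) x)) z)"
      unfolding agree_def by simp
  qed
  then show ?thesis using that[of n] by simp
qed

lemma finite_state_imp_transducer:
  assumes f: "inj f" "cantor_continuous f" and fs: "finite_state f"
  shows "\<exists>S s0 t out. transducer_computes S s0 t out f"
proof -
  have "finite (states f)" using fs unfolding finite_state_def states_def by simp
  then obtain e :: "(cantor \<Rightarrow> cantor) \<Rightarrow> nat" and m where e: "inj_on e (states f)"
    using finite_imp_inj_to_nat_seg by blast
  let ?t = "restriction_step (states f) e" and ?out = "restriction_out (states f) e"
  have "transducer_computes (e ` states f) (e f) ?t ?out f"
    unfolding transducer_computes_def
  proof (intro conjI allI ballI)
    show "finite (e ` states f)" using \<open>finite (states f)\<close> by simp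
    show "e f \<in> e ` states f" unfolding states_def by simp
    show "?t s b \<in> e ` states f" if "s \<in> e ` states f" for s b
      using restriction_step_closed[OF f(1) e that] .
    fix x k
    obtain n where n: "k < common_prefix_length (f \<circ> prepend (stake (Suc n) x))"
      using common_prefix_length_unbounded[OF f] .
    let ?w = "stake (Suc n) x" and ?o = "tr_out_prefix ?t ?out (e f) x (Suc n)"
    have fy: "f (prepend ?w y) = prepend ?o (strip_prefix (f \<circ> prepend ?w) y)" for y
      using tr_out_prefix_restriction_out[OF f(1) e, of "Suc n" x y]
      by (simp add: state_after_def stake_Suc)
    then have fw: "f \<circ> prepend ?w = prepend ?o \<circ> strip_prefix (f \<circ> prepend ?w)"
      by (simp add: fun_eq_iff)
    have "common_prefix_length (f \<circ> prepend ?w)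
        = common_prefix_length (prepend ?o \<circ> strip_prefix (f \<circ> prepend ?w))"
      using arg_cong[OF fw] .
    also have "\<dots> = length ?o"
      using common_prefix_length_prepend_comp[OF inj_strip_prefix[OF inj_comp_prepend[OF f(1)]]]
        common_prefix_length_strip_prefix[OF inj_comp_prepend[OF f(1)]] by simp
    finally have "common_prefix_length (f \<circ> prepend ?w) = length ?o" .
    then have ko: "k < length ?o" using n by simp
    have "f x = prepend ?o (strip_prefix (f \<circ> prepend ?w) (sdrop (Suc n) x))"
      using fy[of "sdrop (Suc n) x"] by simp
    then have "f x k = ?o ! k" using ko by (simp add: prepend_nth_less)
    then show "\<exists>n. k < length (tr_out_prefix ?t ?out (e f) x n) \<and> tr_out_prefix ?t ?out (e f) x n ! k = f x k"
      using ko by metis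
  qed
  then show ?thesis by blast
qed

section \<open>The group of rational homeomorphisms\<close>

lemma rational_homeos_iff:
  "f \<in> rational_homeos \<longleftrightarrow> bij f \<and> cantor_continuous f \<and> finite_state f"
  unfolding rational_homeos_def homeomorphic_map_cantor_top_iff
  using transducer_imp_finite_state finite_state_imp_transducer bij_is_inj by blast

lemma rational_homeos_comp:
  "f \<in> rational_homeos \<Longrightarrow> g \<in> rational_homeos \<Longrightarrow> f \<circ> g \<in> rational_homeos"
  unfolding rational_homeos_iff using bij_comp cantor_continuous_comp finite_state_comp bij_is_inj by metis

lemma id_in_rational_homeos: "id \<in> rational_homeos"
  unfolding rational_homeos_iff cantor_continuous_def using finite_state_id by auto

lemma rational_homeos_inv: "f \<in> rational_homeos \<Longrightarrow> inv_into UNIV f \<in> rational_homeos"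
  unfolding rational_homeos_iff using bij_imp_bij_inv cantor_continuous_inv finite_state_inv by metis

lemma rational_homeos_funpow: "f \<in> rational_homeos \<Longrightarrow> f ^^ n \<in> rational_homeos"
  by (induction n) (auto simp: id_in_rational_homeos rational_homeos_comp)

lemma m_inv_RG:
  assumes "h \<in> rational_homeos"
  shows "m_inv RG h = inv_into UNIV h"
proof -
  have b: "bij h" using assms rational_homeos_iff by blast
  have hi: "h \<circ> inv_into UNIV h = id" using b by (intro ext) (simp add: bij_is_surj surj_f_inv_f)
  have ih: "inv_into UNIV h \<circ> h = id" using b by (intro ext) (simp add: bij_is_inj inv_f_f)
  show ?thesis unfolding m_inv_def RG_def
  proof (simp, rule the_equality)
    show "inv_into UNIV h \<in> rational_homeos \<and> h \<circ> inv_into UNIV h = id \<and> inv_into UNIV h \<circ> h = id"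
      using rational_homeos_inv[OF assms] hi ih by simp
    fix y assume "y \<in> rational_homeos \<and> h \<circ> y = id \<and> y \<circ> h = id"
    then have "inv_into UNIV h \<circ> (h \<circ> y) = inv_into UNIV h" by simp
    then show "y = inv_into UNIV h" using ih by (simp add: comp_assoc[symmetric])
  qed
qed

lemma commutator_in_derived_RG:
  assumes "a \<in> rational_homeos" "b \<in> rational_homeos"
  shows "a \<circ> b \<circ> inv_into UNIV a \<circ> inv_into UNIV b \<in> derived RG (carrier RG)"
proof -
  have "a \<circ> b \<circ> inv_into UNIV a \<circ> inv_into UNIV b
      = a \<otimes>\<^bsub>RG\<^esub> b \<otimes>\<^bsub>RG\<^esub> m_inv RG a \<otimes>\<^bsub>RG\<^esub> m_inv RG b"
    using assms by (simp add: m_inv_RG) (simp add: RG_def)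
  moreover have "a \<in> carrier RG" "b \<in> carrier RG" using assms by (simp_all add: RG_def)
  ultimately have "a \<circ> b \<circ> inv_into UNIV a \<circ> inv_into UNIV b \<in> derived_set RG (carrier RG)"
    by blast
  then show ?thesis unfolding derived_def by (rule generate.incl)
qed

section \<open>Prefix flips and a Thompson-type map\<close>

definition flip_prefix :: "bool list \<Rightarrow> cantor \<Rightarrow> cantor" where
  "flip_prefix m x = (\<lambda>i. if i < length m then x i \<noteq> m ! i else x i)"

lemma flip_prefix_flip_prefix [simp]: "flip_prefix m (flip_prefix m x) = x"
  by (auto simp: flip_prefix_def fun_eq_iff)

lemma bij_flip_prefix: "bij (flip_prefix m)"
  by (rule o_bij[where g = "flip_prefix m"]) (simp_all add: fun_eq_iff)

lemma cantor_continuous_flip_prefix: "cantor_continuous (flip_prefix m)"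
  unfolding cantor_continuous_def agree_def flip_prefix_def by auto

lemma finite_state_flip_prefix: "finite_state (flip_prefix m)"
proof (rule finite_stateI)
  let ?T = "insert id ((\<lambda>w. strip_prefix (flip_prefix m \<circ> prepend w)) ` {w. length w \<le> length m})"
  show "finite ?T" by (simp add: finite_lists_length_le[of UNIV, simplified])
  fix w
  show "strip_prefix (flip_prefix m \<circ> prepend w) \<in> ?T"
  proof (cases "length w \<le> length m")
    case True then show ?thesis by simp
  next
    case False
    define w' where "w' = stake (length w) (flip_prefix m (prepend w (\<lambda>_. False)))"
    have "flip_prefix m \<circ> prepend w = prepend w'"
    proof (rule ext)
      fix y show "(flip_prefix m \<circ> prepend w) y = prepend w' y"
        unfolding w'_def using False by (auto simp: fun_eq_iff flip_prefix_def prepend_def)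
    qed
    then show ?thesis by simp
  qed
qed

lemma flip_prefix_in_rational_homeos: "flip_prefix m \<in> rational_homeos"
  using rational_homeos_iff bij_flip_prefix cantor_continuous_flip_prefix finite_state_flip_prefix by blast

definition thompson :: "cantor \<Rightarrow> cantor" where
  "thompson x = (if \<not> x 0 then prepend [False] x
     else if \<not> x 1 then prepend [False, True] (sdrop 2 x) else sdrop 1 x)"

definition thompson_inv :: "cantor \<Rightarrow> cantor" where
  "thompson_inv y = (if \<not> y 0 then (if \<not> y 1 then sdrop 1 y else prepend [True, False] (sdrop 2 y))
     else prepend [True] y)"

lemma thompson_inv_thompson: "thompson_inv (thompson x) = x"
proof -
  consider "\<not> x 0" | "x 0" "\<not> x 1" | "x 0" "x 1" by blast
  then show ?thesis
  proof cases
    case 1 then show ?thesis unfolding thompson_def thompson_inv_def by (simp add: prepend_def sdrop_def)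
  next
    case 2
    then have "thompson_inv (thompson x) = prepend [x 0, x 1] (sdrop 2 x)" unfolding thompson_def thompson_inv_def
      by (simp add: sdrop_prepend_le[of 2 "[False, True]", simplified] sdrop_sdrop)
    then show ?thesis using prepend_head2 by simp
  next
    case 3
    then have "thompson_inv (thompson x) = prepend [x 0] (sdrop 1 x)"
      unfolding thompson_def thompson_inv_def by (simp add: sdrop_nth)
    then show ?thesis using prepend_head by simp
  qed
qed

lemma thompson_thompson_inv: "thompson (thompson_inv y) = y"
proof -
  consider "\<not> y 0" "\<not> y 1" | "\<not> y 0" "y 1" | "y 0" by blast
  then show ?thesis
  proof cases
    case 1
    then have "thompson (thompson_inv y) = prepend [y 0] (sdrop 1 y)"
      unfolding thompson_def thompson_inv_def by (simp add: sdrop_nth)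
    then show ?thesis using prepend_head by simp
  next
    case 2
    then have "thompson (thompson_inv y) = prepend [y 0, y 1] (sdrop 2 y)" unfolding thompson_def thompson_inv_def
      by (simp add: sdrop_prepend_le[of 2 "[True, False]", simplified])
    then show ?thesis using prepend_head2 by simp
  next
    case 3 then show ?thesis unfolding thompson_def thompson_inv_def by (simp add: prepend_def sdrop_def)
  qed
qed

lemma bij_thompson: "bij thompson"
  by (rule o_bij[where g = thompson_inv]) (simp_all add: fun_eq_iff thompson_inv_thompson thompson_thompson_inv)

lemma cantor_continuous_thompson: "cantor_continuous thompson"
proof (rule cantor_continuous_local)
  fix x :: cantor
  let ?h = "if \<not> x 0 then prepend [False]
    else if \<not> x 1 then prepend [False, True] \<circ> sdrop 2 else sdrop 1"
  have "cantor_continuous ?h"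
    by (simp add: cantor_continuous_prepend cantor_continuous_sdrop cantor_continuous_comp)
  moreover have "thompson y = ?h y" if "agree 2 y x" for y
  proof -
    have "y 0 = x 0" "y 1 = x 1" using that unfolding agree_def by auto
    then show ?thesis by (simp add: thompson_def)
  qed
  ultimately show "\<exists>n h. cantor_continuous h \<and> (\<forall>y. agree n y x \<longrightarrow> thompson y = h y)"
    by blast
qed

lemma finite_state_thompson: "finite_state thompson"
proof (rule finite_stateI)
  let ?T = "{strip_prefix thompson, strip_prefix (thompson \<circ> prepend [True]), id}"
  show "finite ?T" by simp
  fix w
  consider "w = []" | v where "w = False # v" | "w = [True]" | u where "w = True # False # u"
    | u where "w = True # True # u"
    by (metis (full_types) list.exhaust)
  then show "strip_prefix (thompson \<circ> prepend w) \<in> ?T"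
  proof cases
    case 1 then show ?thesis by simp
  next
    case (2 v)
    have "thompson \<circ> prepend w = prepend (False # False # v)"
      unfolding 2 by (rule ext) (simp add: thompson_def prepend_prepend)
    then show ?thesis by simp
  next
    case 3 then show ?thesis by simp
  next
    case (4 u)
    have "thompson \<circ> prepend w = prepend (False # True # u)"
      unfolding 4 by (rule ext) (simp add: thompson_def prepend_prepend sdrop_prepend_le[of 2, simplified])
    then show ?thesis by simp
  next
    case (5 u)
    have "thompson \<circ> prepend w = prepend (True # u)"
      unfolding 5 by (rule ext) (simp add: thompson_def prepend_prepend sdrop_prepend_le[of 1, simplified])
    then show ?thesis by simp
  qed
qed

lemma thompson_in_rational_homeos: "thompson \<in> rational_homeos"
  using rational_homeos_iff bij_thompson cantor_continuous_thompson finite_state_thompson by blast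

lemma inv_thompson: "inv_into UNIV thompson = thompson_inv"
proof (rule ext)
  fix z show "inv_into UNIV thompson z = thompson_inv z"
    by (rule inv_into_f_eq) (simp_all add: bij_is_inj[OF bij_thompson] thompson_thompson_inv)
qed

lemma thompson_inv_in_rational_homeos: "thompson_inv \<in> rational_homeos"
  using rational_homeos_inv[OF thompson_in_rational_homeos] inv_thompson by simp

section \<open>A swindle for maps supported in the cylinder [10]\<close>

definition leading_zeros :: "cantor \<Rightarrow> nat" where "leading_zeros x = (LEAST i. x i)"

definition zeros_one :: "nat \<Rightarrow> bool list" where "zeros_one n = replicate n False @ [True]"

lemma sdrop_prepend2 [simp]: "sdrop 2 (prepend [a, b] y) = y"
  using sdrop_prepend[of "[a, b]" y] by (simp add: numeral_2_eq_2)

lemma zeros_one_1 [simp]: "zeros_one (Suc 0) = [False, True]" by (simp add: zeros_one_def)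

lemma length_zeros_one [simp]: "length (zeros_one n) = Suc n" by (simp add: zeros_one_def)

lemma prepend_zeros_one_less: "i < n \<Longrightarrow> prepend (zeros_one n) y i = False"
  by (simp add: prepend_def zeros_one_def nth_append)

lemma prepend_zeros_one_nth: "prepend (zeros_one n) y n = True"
  by (simp add: prepend_def zeros_one_def nth_append)

lemma leading_zeros_zeros_one: "leading_zeros (prepend (zeros_one n) y) = n"
  unfolding leading_zeros_def
proof (rule Least_equality)
  show "prepend (zeros_one n) y n" using prepend_zeros_one_nth by simp
  fix m assume m: "prepend (zeros_one n) y m"
  show "n \<le> m"
  proof (rule ccontr)
    assume "\<not> n \<le> m" then have "m < n" by simp
    then show False using prepend_zeros_one_less[of m n y] m by simp
  qed
qed

lemma zeros_one_decomp:
  assumes "\<not> (\<forall>i. \<not> x i)"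
  shows "x = prepend (zeros_one (leading_zeros x)) (sdrop (Suc (leading_zeros x)) x)"
proof -
  obtain j where j: "x j" using assms by blast
  have x1: "x (leading_zeros x)" unfolding leading_zeros_def using j by (rule LeastI)
  have x0: "i < leading_zeros x \<Longrightarrow> \<not> x i" for i unfolding leading_zeros_def using not_less_Least by blast
  show ?thesis
  proof (rule ext)
    fix i
    consider "i < leading_zeros x" | "i = leading_zeros x" | "leading_zeros x < i" by linarith
    then show "x i = prepend (zeros_one (leading_zeros x)) (sdrop (Suc (leading_zeros x)) x) i"
    proof cases
      case 1 then show ?thesis using x0 prepend_zeros_one_less by simp
    next
      case 2 then show ?thesis using x1 prepend_zeros_one_nth by simp
    next
      case 3 then show ?thesis by (simp add: prepend_nth_ge sdrop_def)
    qed
  qed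
qed

lemma sdrop_zeros_one: "sdrop (Suc n) (prepend (zeros_one n) y) = y"
  using sdrop_prepend[of "zeros_one n" y] by simp

lemma prepend_zeros_one_nonzero: "\<not> (\<forall>i. \<not> prepend (zeros_one n) y i)"
  using prepend_zeros_one_nth by blast

lemma prepend_False_zeros_one: "prepend [False] (prepend (zeros_one n) y) = prepend (zeros_one (Suc n)) y"
  by (simp add: prepend_prepend zeros_one_def)

lemma zeros_or_zeros_one_prefix: "(\<exists>m. v = replicate m False) \<or> (\<exists>n u. v = zeros_one n @ u)"
proof (induction v)
  case Nil then show ?case by simp
next
  case (Cons b v)
  show ?case
  proof (cases b)
    case True then show ?thesis by (metis append_Cons append_Nil zeros_one_def replicate_0)
  next
    case False
    from Cons.IH show ?thesis
    proof
      assume "\<exists>m. v = replicate m False"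
      then show ?thesis using False by (metis replicate_Suc)
    next
      assume "\<exists>n u. v = zeros_one n @ u"
      then obtain n u where "v = zeros_one n @ u" by blast
      then have "b # v = zeros_one (Suc n) @ u" using False by (simp add: zeros_one_def)
      then show ?thesis by blast
    qed
  qed
qed

context
  fixes k :: "cantor \<Rightarrow> cantor"
  assumes k_rational: "k \<in> rational_homeos"
    and k_supported: "\<And>x. \<not> (x 0 \<and> \<not> x 1) \<Longrightarrow> k x = x"
begin

text \<open>The swindle acts as k on [1] and, on each cylinder [0^n 1] with n \<ge> 1, as a copy of
  the restriction of k to [10]. The Thompson map sends [10] to [01] and [0^n 1] to [0^(n+1) 1],
  so it shifts these copies along one place, and swindle \<circ> thompson differs from
  thompson \<circ> swindle only by the copy of k on [10].\<close>

definition restrict_10 :: "cantor \<Rightarrow> cantor" where "restrict_10 y = sdrop 2 (k (prepend [True, False] y))"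

definition swindle_tail :: "cantor \<Rightarrow> cantor" where
  "swindle_tail x = (if \<forall>i. \<not> x i then x
     else prepend (zeros_one (leading_zeros x)) (restrict_10 (sdrop (Suc (leading_zeros x)) x)))"

definition swindle :: "cantor \<Rightarrow> cantor" where
  "swindle x = (if x 0 then k x else swindle_tail x)"

lemma k_bij: "bij k" and k_cont: "cantor_continuous k" and k_finite_state: "finite_state k"
  using k_rational rational_homeos_iff by auto

lemma k_inj: "inj k" using k_bij bij_is_inj by blast

lemma k_cylinder_10: "k (prepend [True, False] y) = prepend [True, False] (restrict_10 y)"
proof -
  define z where "z = k (prepend [True, False] y)"
  have z01: "z 0 \<and> \<not> z 1"
  proof (rule ccontr)
    assume "\<not> (z 0 \<and> \<not> z 1)"
    then have "k z = z" using k_supported by blast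
    then have "z = prepend [True, False] y" using k_inj unfolding z_def by (metis injD)
    then show False using \<open>\<not> (z 0 \<and> \<not> z 1)\<close> by (simp add: numeral_2_eq_2)
  qed
  have "z = prepend [z 0, z 1] (sdrop 2 z)" using prepend_head2 by simp
  then show ?thesis using z01 unfolding restrict_10_def z_def by simp
qed

lemma inj_restrict_10: "inj restrict_10"
proof (rule injI)
  fix x y assume "restrict_10 x = restrict_10 y"
  then have "k (prepend [True, False] x) = k (prepend [True, False] y)" using k_cylinder_10 by simp
  then show "x = y" using k_inj inj_prepend injD by (metis injD)
qed

lemma surj_restrict_10: "surj restrict_10"
proof -
  have "y \<in> range restrict_10" for y
  proof -
    obtain x where x: "k x = prepend [True, False] y" using k_bij by (metis bij_pointE)
    have "x 0 \<and> \<not> x 1"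
    proof (rule ccontr)
      assume "\<not> (x 0 \<and> \<not> x 1)"
      then have "x = prepend [True, False] y" using k_supported x by simp
      then show False using \<open>\<not> (x 0 \<and> \<not> x 1)\<close> by (simp add: numeral_2_eq_2)
    qed
    then have "x = prepend [True, False] (sdrop 2 x)" using prepend_head2[of x] by simp
    then have "prepend [True, False] (restrict_10 (sdrop 2 x)) = prepend [True, False] y" using x k_cylinder_10 by metis
    then show ?thesis using inj_prepend injD by (metis rangeI)
  qed
  then show ?thesis by blast
qed

lemma cantor_continuous_restrict_10: "cantor_continuous restrict_10"
proof -
  have "restrict_10 = sdrop 2 \<circ> k \<circ> prepend [True, False]" by (simp add: fun_eq_iff restrict_10_def)
  then show ?thesis using cantor_continuous_comp cantor_continuous_sdrop cantor_continuous_prepend k_cont by metis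
qed

lemma restrictions_restrict_10: "restrictions restrict_10 \<subseteq> restrictions k"
proof
  fix r assume "r \<in> restrictions restrict_10"
  then obtain u where r: "r = strip_prefix (restrict_10 \<circ> prepend u)" unfolding restrictions_def by auto
  have "k \<circ> prepend (True # False # u) = prepend [True, False] \<circ> (restrict_10 \<circ> prepend u)"
  proof (rule ext)
    fix x
    have "prepend (True # False # u) x = prepend [True, False] (prepend u x)" by (simp add: prepend_prepend)
    then show "(k \<circ> prepend (True # False # u)) x = (prepend [True, False] \<circ> (restrict_10 \<circ> prepend u)) x"
      using k_cylinder_10 by simp
  qed
  then have "strip_prefix (k \<circ> prepend (True # False # u)) = r"
    unfolding r using strip_prefix_prepend_comp inj_comp_prepend[OF inj_restrict_10] by metis
  then show "r \<in> restrictions k" unfolding restrictions_def by (metis rangeI)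
qed

lemma swindle_tail_zeros: "\<forall>i. \<not> x i \<Longrightarrow> swindle_tail x = x" by (simp add: swindle_tail_def)

lemma swindle_tail_zeros_one: "swindle_tail (prepend (zeros_one n) y) = prepend (zeros_one n) (restrict_10 y)"
  unfolding swindle_tail_def using prepend_zeros_one_nonzero
  by (simp only: if_False leading_zeros_zeros_one sdrop_zeros_one)

lemma swindle_tail_prepend_False: "swindle_tail (prepend [False] x) = prepend [False] (swindle_tail x)"
proof (cases "\<forall>i. \<not> x i")
  case True
  then have "\<forall>i. \<not> prepend [False] x i" by (simp add: prepend_def)
  then show ?thesis using True by (simp add: swindle_tail_zeros)
next
  case False
  then have x: "x = prepend (zeros_one (leading_zeros x)) (sdrop (Suc (leading_zeros x)) x)" by (rule zeros_one_decomp)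
  show ?thesis by (subst (1 2) x) (simp add: prepend_False_zeros_one swindle_tail_zeros_one)
qed

lemma swindle_tail_prepend_replicate:
  "swindle_tail (prepend (replicate m False) x) = prepend (replicate m False) (swindle_tail x)"
proof (induction m)
  case 0 then show ?case by simp
next
  case (Suc m)
  have "prepend (replicate (Suc m) False) z = prepend [False] (prepend (replicate m False) z)" for z
    by (simp add: prepend_prepend)
  then show ?case using Suc swindle_tail_prepend_False by simp
qed

lemma swindle_tail_cases:
  obtains "\<forall>i. \<not> x i" "swindle_tail x = x"
  | n y where "x = prepend (zeros_one n) y" "swindle_tail x = prepend (zeros_one n) (restrict_10 y)"
proof (cases "\<forall>i. \<not> x i")
  case True then show ?thesis using that(1) swindle_tail_zeros by blast
next
  case False
  then have "x = prepend (zeros_one (leading_zeros x)) (sdrop (Suc (leading_zeros x)) x)" by (rule zeros_one_decomp)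
  then show ?thesis using that(2) swindle_tail_zeros_one by metis
qed

lemma inj_swindle_tail: "inj swindle_tail"
proof (rule injI)
  fix x x' assume e: "swindle_tail x = swindle_tail x'"
  show "x = x'"
  proof (cases x rule: swindle_tail_cases)
    case 1
    note X = this
    show ?thesis
    proof (cases x' rule: swindle_tail_cases)
      case 1 then show ?thesis using e X by simp
    next
      case (2 n y)
      then have "swindle_tail x' n" using prepend_zeros_one_nth by simp
      then show ?thesis using e X by simp
    qed
  next
    case (2 n y)
    note X = this
    show ?thesis
    proof (cases x' rule: swindle_tail_cases)
      case 1
      have "swindle_tail x n" using X prepend_zeros_one_nth by simp
      then show ?thesis using e 1 by simp
    next
      case (2 n' y')
      note X' = this
      have "n = leading_zeros (swindle_tail x)" using X leading_zeros_zeros_one by simp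
      also have "\<dots> = n'" using e X' leading_zeros_zeros_one by simp
      finally have nn: "n = n'" .
      then have "restrict_10 y = restrict_10 y'" using e X X' inj_prepend injD by metis
      then have "y = y'" using inj_restrict_10 by (simp add: injD)
      then show ?thesis using X X' nn by simp
    qed
  qed
qed

lemma swindle_tail_first_bit: "\<not> x 0 \<Longrightarrow> \<not> swindle_tail x 0"
proof (cases x rule: swindle_tail_cases)
  case 1 then show "\<not> x 0 \<Longrightarrow> \<not> swindle_tail x 0" by simp
next
  case (2 n y)
  assume "\<not> x 0"
  then have "n \<noteq> 0" using 2 prepend_zeros_one_nth by metis
  then show ?thesis using 2 prepend_zeros_one_less by simp
qed

lemma swindle_tail_surj: "\<not> z 0 \<Longrightarrow> \<exists>x. \<not> x 0 \<and> swindle_tail x = z"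
proof (cases "\<forall>i. \<not> z i")
  case True then show ?thesis using swindle_tail_zeros by blast
next
  case False
  assume z0: "\<not> z 0"
  from zeros_one_decomp[OF False] obtain n y where zy: "z = prepend (zeros_one n) y" by blast
  obtain y' where "restrict_10 y' = y" using surj_restrict_10 by (metis surjD)
  then have "swindle_tail (prepend (zeros_one n) y') = z" using zy swindle_tail_zeros_one by simp
  moreover have "\<not> prepend (zeros_one n) y' 0"
    using z0 zy by (metis prepend_zeros_one_less prepend_zeros_one_nth neq0_conv)
  ultimately show ?thesis by blast
qed

lemma k_first_bit: "x 0 \<Longrightarrow> k x 0"
proof (cases "x 1")
  case True
  assume "x 0" then show ?thesis using k_supported True by simp
next
  case False
  assume "x 0"
  then have "x = prepend [True, False] (sdrop 2 x)" using prepend_head2[of x] False by simp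
  then show ?thesis using k_cylinder_10 by (metis prepend_Cons_0)
qed

lemma inj_swindle: "inj swindle"
proof (rule injI)
  fix x y assume e: "swindle x = swindle y"
  have first_bit: "swindle z 0 \<longleftrightarrow> z 0" for z
    unfolding swindle_def using k_first_bit swindle_tail_first_bit by auto
  show "x = y"
  proof (cases "x 0")
    case True
    then have "y 0" using e first_bit by metis
    then show ?thesis using True e k_inj unfolding swindle_def by (simp add: injD)
  next
    case False
    then have "\<not> y 0" using e first_bit by metis
    then show ?thesis using False e inj_swindle_tail unfolding swindle_def by (simp add: injD)
  qed
qed

lemma surj_swindle: "surj swindle"
proof -
  have "z \<in> range swindle" for z
  proof (cases "z 0")
    case True
    obtain x where x: "k x = z" using k_bij by (metis bij_pointE)
    have "x 0"
    proof (rule ccontr)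
      assume "\<not> x 0"
      then have "k x = x" using k_supported by blast
      then show False using x True \<open>\<not> x 0\<close> by simp
    qed
    then have "swindle x = z" using x unfolding swindle_def by simp
    then show ?thesis by blast
  next
    case False
    then obtain x where "\<not> x 0" "swindle_tail x = z" using swindle_tail_surj by blast
    then have "swindle x = z" unfolding swindle_def by simp
    then show ?thesis by blast
  qed
  then show ?thesis by blast
qed

lemma cantor_continuous_swindle_tail: "cantor_continuous swindle_tail"
  unfolding cantor_continuous_def
proof (intro allI)
  fix x' kk
  show "\<exists>n. \<forall>y. agree n y x' \<longrightarrow> agree kk (swindle_tail y) (swindle_tail x')"
  proof (cases x' rule: swindle_tail_cases)
    case 1
    note X = this
    show ?thesis
    proof (intro exI allI impI)
      fix y assume a: "agree kk y x'"
      show "agree kk (swindle_tail y) (swindle_tail x')"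
      proof (cases y rule: swindle_tail_cases)
        case 1 then show ?thesis using a X by simp
      next
        case (2 n z)
        note Y = this
        have "kk \<le> n"
        proof (rule ccontr)
          assume "\<not> kk \<le> n"
          then have "y n = x' n" using a unfolding agree_def by simp
          moreover have "y n" using Y prepend_zeros_one_nth by simp
          ultimately show False using X by simp
        qed
        then have "\<forall>i<kk. swindle_tail y i = False" using Y prepend_zeros_one_less by simp
        then show ?thesis unfolding agree_def using X by simp
      qed
    qed
  next
    case (2 n z)
    note X = this
    obtain m where m: "\<forall>y. agree m y z \<longrightarrow> agree kk (restrict_10 y) (restrict_10 z)"
      using cantor_continuous_restrict_10 unfolding cantor_continuous_def by blast
    show ?thesis
    proof (intro exI allI impI)
      fix y assume a: "agree (Suc n + m) y x'"
      have "agree (Suc n) y x'" using a agree_mono by fastforce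
      then have "stake (Suc n) y = stake (Suc n) x'" by (rule agree_stake)
      also have "\<dots> = zeros_one n" using X stake_prepend[of "zeros_one n" z] by simp
      finally have yy: "y = prepend (zeros_one n) (sdrop (Suc n) y)"
        using prepend_stake_sdrop[of "Suc n" y] by simp
      have "agree m (sdrop (Suc n) y) (sdrop (Suc n) x')" using agree_sdrop[OF a] .
      then have "agree m (sdrop (Suc n) y) z" using X sdrop_zeros_one by simp
      then have "agree kk (restrict_10 (sdrop (Suc n) y)) (restrict_10 z)" using m by blast
      then have "agree (Suc n + kk) (prepend (zeros_one n) (restrict_10 (sdrop (Suc n) y)))
          (prepend (zeros_one n) (restrict_10 z))"
        using agree_prepend[of "zeros_one n"] by simp
      then have "agree (Suc n + kk) (swindle_tail y) (swindle_tail x')"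
        using X yy swindle_tail_zeros_one by metis
      then show "agree kk (swindle_tail y) (swindle_tail x')" by (rule agree_mono) simp
    qed
  qed
qed

lemma cantor_continuous_swindle: "cantor_continuous swindle"
proof (rule cantor_continuous_local)
  fix x :: cantor
  have "cantor_continuous (if x 0 then k else swindle_tail)"
    using k_cont cantor_continuous_swindle_tail by simp
  moreover have "swindle y = (if x 0 then k else swindle_tail) y" if "agree 1 y x" for y
    using that unfolding agree_def swindle_def by simp
  ultimately show "\<exists>n h. cantor_continuous h \<and> (\<forall>y. agree n y x \<longrightarrow> swindle y = h y)"
    by blast
qed

lemma restriction_swindle_tail:
  "strip_prefix (swindle_tail \<circ> prepend v) \<in> insert (strip_prefix swindle_tail) (restrictions k)"
proof -
  have iA: "inj swindle_tail" by (rule inj_swindle_tail)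
  from zeros_or_zeros_one_prefix[of v] show ?thesis
  proof
    assume "\<exists>m. v = replicate m False"
    then obtain m where v: "v = replicate m False" by blast
    have "swindle_tail \<circ> prepend v = prepend v \<circ> swindle_tail"
      unfolding v by (rule ext) (simp add: swindle_tail_prepend_replicate)
    then have "strip_prefix (swindle_tail \<circ> prepend v) = strip_prefix swindle_tail"
      using strip_prefix_prepend_comp[OF iA] by metis
    then show ?thesis by simp
  next
    assume "\<exists>n u. v = zeros_one n @ u"
    then obtain n u where v: "v = zeros_one n @ u" by blast
    have "swindle_tail \<circ> prepend v = prepend (zeros_one n) \<circ> (restrict_10 \<circ> prepend u)"
    proof (rule ext)
      fix y
      have "prepend v y = prepend (zeros_one n) (prepend u y)" unfolding v by (simp add: prepend_prepend)
      then show "(swindle_tail \<circ> prepend v) y = (prepend (zeros_one n) \<circ> (restrict_10 \<circ> prepend u)) y"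
        by (simp add: swindle_tail_zeros_one)
    qed
    then have "strip_prefix (swindle_tail \<circ> prepend v) = strip_prefix (restrict_10 \<circ> prepend u)"
      using strip_prefix_prepend_comp inj_comp_prepend[OF inj_restrict_10] by metis
    moreover have "strip_prefix (restrict_10 \<circ> prepend u) \<in> restrictions k"
      using restrictions_restrict_10 unfolding restrictions_def by blast
    ultimately show ?thesis by simp
  qed
qed

lemma finite_state_swindle: "finite_state swindle"
proof (rule finite_stateI)
  let ?T = "insert (strip_prefix swindle) (insert (strip_prefix swindle_tail) (restrictions k))"
  show "finite ?T" using k_finite_state unfolding finite_state_def by simp
  fix w
  consider "w = []" | v where "w = True # v" | v where "w = False # v"
    by (metis (full_types) list.exhaust)
  then show "strip_prefix (swindle \<circ> prepend w) \<in> ?T"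
  proof cases
    case 1 then show ?thesis by simp
  next
    case (2 v)
    have "swindle \<circ> prepend w = k \<circ> prepend w" unfolding 2 by (rule ext) (simp add: swindle_def)
    then show ?thesis unfolding restrictions_def by simp
  next
    case (3 v)
    have "swindle \<circ> prepend w = prepend [False] \<circ> (swindle_tail \<circ> prepend v)"
    proof (rule ext)
      fix y
      have "prepend w y = prepend [False] (prepend v y)" unfolding 3 by (simp add: prepend_prepend)
      then show "(swindle \<circ> prepend w) y = (prepend [False] \<circ> (swindle_tail \<circ> prepend v)) y"
        by (simp add: swindle_def swindle_tail_prepend_False)
    qed
    then have "strip_prefix (swindle \<circ> prepend w) = strip_prefix (swindle_tail \<circ> prepend v)"
      using strip_prefix_prepend_comp inj_comp_prepend[OF inj_swindle_tail] by metis
    then show ?thesis using restriction_swindle_tail by simp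
  qed
qed

lemma swindle_in_rational_homeos: "swindle \<in> rational_homeos"
  using rational_homeos_iff inj_swindle surj_swindle bij_def cantor_continuous_swindle finite_state_swindle by blast

lemma swindle_thompson_commute: "swindle \<circ> thompson = k \<circ> thompson \<circ> swindle"
proof (rule ext)
  fix x
  show "(swindle \<circ> thompson) x = (k \<circ> thompson \<circ> swindle) x"
  proof (cases "x 0")
    case False
    have "thompson x = prepend [False] x" using False unfolding thompson_def by simp
    then have l: "swindle (thompson x) = prepend [False] (swindle_tail x)"
      unfolding swindle_def by (simp add: swindle_tail_prepend_False)
    have "\<not> swindle_tail x 0" using swindle_tail_first_bit False by blast
    then have "thompson (swindle x) = prepend [False] (swindle_tail x)"
      using False unfolding swindle_def thompson_def by simp
    moreover have "k (prepend [False] (swindle_tail x)) = prepend [False] (swindle_tail x)"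
      using k_supported by simp
    ultimately show ?thesis using l by simp
  next
    case True
    show ?thesis
    proof (cases "x 1")
      case False
      define y where "y = sdrop 2 x"
      have x: "x = prepend [True, False] y" unfolding y_def using prepend_head2[of x] True False by simp
      have "thompson x = prepend (zeros_one 1) y" unfolding x thompson_def zeros_one_1 by simp
      moreover have "\<not> prepend (zeros_one 1) y 0" using prepend_zeros_one_less[of 0 1] by simp
      ultimately have l: "swindle (thompson x) = prepend [False, True] (restrict_10 y)"
        unfolding swindle_def using swindle_tail_zeros_one[of "Suc 0" y] by simp
      have "swindle x = prepend [True, False] (restrict_10 y)"
        unfolding swindle_def using True x k_cylinder_10 by simp
      then have "thompson (swindle x) = prepend [False, True] (restrict_10 y)" unfolding thompson_def by simp
      moreover have "k (prepend [False, True] (restrict_10 y)) = prepend [False, True] (restrict_10 y)"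
        using k_supported by simp
      ultimately show ?thesis using l by simp
    next
      case T1: True
      have kx: "k x = x" using k_supported True T1 by simp
      have "thompson x = sdrop 1 x" using True T1 unfolding thompson_def by simp
      moreover have "sdrop 1 x 0" using T1 by (simp add: sdrop_def)
      ultimately have l: "swindle (thompson x) = k (sdrop 1 x)" unfolding swindle_def by simp
      have "swindle x = x" using True kx unfolding swindle_def by simp
      then have "thompson (swindle x) = sdrop 1 x" using True T1 unfolding thompson_def by simp
      then show ?thesis using l by simp
    qed
  qed
qed

end

section \<open>Maps with small support\<close>

lemma thompson_inv_into_11: "z 0 \<Longrightarrow> thompson_inv z 0 \<and> thompson_inv z 1"
  unfolding thompson_inv_def by simp

lemma ex_thompson_inv_less:
  assumes "\<exists>i<Suc (Suc n). z i"
  shows "\<exists>i<Suc n. thompson_inv z i"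
proof (rule ccontr)
  assume a: "\<not> (\<exists>i<Suc n. thompson_inv z i)"
  then have "z = prepend [False] (thompson_inv z)"
    using thompson_thompson_inv[of z] unfolding thompson_def by simp
  then have "\<not> z i" if "i < Suc (Suc n)" for i
    using a that by (cases i) (metis prepend_Cons_0, metis Suc_less_eq prepend_Cons_Suc prepend_Nil)
  then show False using assms by blast
qed

lemma thompson_inv_funpow_into_11:
  "\<exists>i<Suc n. z i \<Longrightarrow> (thompson_inv ^^ Suc n) z 0 \<and> (thompson_inv ^^ Suc n) z 1"
proof (induction n arbitrary: z)
  case 0
  then show ?case using thompson_inv_into_11 by simp
next
  case (Suc n)
  then show ?case
    using ex_thompson_inv_less[OF Suc.prems] by (simp only: funpow_Suc_right comp_apply)
qed

lemma flip_prefix_11_into_10: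
  "z 0 \<Longrightarrow> z 1 \<Longrightarrow> flip_prefix [False, True] z 0 \<and> \<not> flip_prefix [False, True] z 1"
  by (simp add: flip_prefix_def)

text \<open>Flipping by a prefix of x0 puts a 1 among the first n + 1 bits of every point of E. The
  inverse Thompson map moves the first 1 one place to the left until it is the first bit, and maps
  [1] into [11].\<close>

lemma rational_conjugator_into_10:
  assumes "\<And>y. agree n y x0 \<Longrightarrow> y \<notin> E"
  obtains \<phi> where "\<phi> \<in> rational_homeos" "\<And>y. y \<in> E \<Longrightarrow> \<phi> y 0 \<and> \<not> \<phi> y 1"
proof -
  let ?u = "stake (Suc n) x0"
  define \<phi> where "\<phi> = flip_prefix [False, True] \<circ> (thompson_inv ^^ Suc n) \<circ> flip_prefix ?u"
  have "\<phi> \<in> rational_homeos"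
    unfolding \<phi>_def by (intro rational_homeos_comp flip_prefix_in_rational_homeos
      rational_homeos_funpow thompson_inv_in_rational_homeos)
  moreover have "\<phi> y 0 \<and> \<not> \<phi> y 1" if "y \<in> E" for y
  proof -
    have "\<not> agree n y x0" using assms that by blast
    then obtain i where i: "i < n" "y i \<noteq> x0 i"
      unfolding agree_def by blast
    then have "flip_prefix ?u y i" by (simp add: flip_prefix_def)
    then have "\<exists>i<Suc n. flip_prefix ?u y i" using i(1) less_SucI by blast
    then have "(thompson_inv ^^ Suc n) (flip_prefix ?u y) 0 \<and> (thompson_inv ^^ Suc n) (flip_prefix ?u y) 1"
      by (rule thompson_inv_funpow_into_11)
    then show ?thesis
      unfolding \<phi>_def comp_apply using flip_prefix_11_into_10 by blast
  qed
  ultimately show ?thesis by (rule that)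
qed

lemma small_support_conjugate_supported_in_10:
  assumes "f \<in> rational_homeos" "small_support f"
  obtains \<phi> where "\<phi> \<in> rational_homeos"
    "\<And>x. \<not> (x 0 \<and> \<not> x 1) \<Longrightarrow> (\<phi> \<circ> f \<circ> inv_into UNIV \<phi>) x = x"
proof -
  obtain E where E: "clopen_cantor E" "E \<noteq> UNIV" "\<And>x. x \<notin> E \<Longrightarrow> f x = x"
    using assms(2) unfolding small_support_def by blast
  obtain x0 where x0: "x0 \<notin> E" using E(2) by blast
  have "openin cantor_top (UNIV - E)"
    using E(1) unfolding clopen_cantor_def closedin_def by simp
  moreover have "x0 \<in> UNIV - E" using x0 by simp
  ultimately obtain n where "{y. agree n y x0} \<subseteq> UNIV - E"
    by (rule openin_cantor_top_cylinder)
  then obtain \<phi> where \<phi>: "\<phi> \<in> rational_homeos" "\<And>y. y \<in> E \<Longrightarrow> \<phi> y 0 \<and> \<not> \<phi> y 1"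
    using rational_conjugator_into_10 by blast
  have "bij \<phi>" using \<phi>(1) rational_homeos_iff by blast
  have "(\<phi> \<circ> f \<circ> inv_into UNIV \<phi>) x = x" if "\<not> (x 0 \<and> \<not> x 1)" for x
  proof -
    have x: "\<phi> (inv_into UNIV \<phi> x) = x"
      using \<open>bij \<phi>\<close> by (simp add: bij_is_surj surj_f_inv_f)
    have "inv_into UNIV \<phi> x \<notin> E"
    proof
      assume "inv_into UNIV \<phi> x \<in> E"
      then have "\<phi> (inv_into UNIV \<phi> x) 0 \<and> \<not> \<phi> (inv_into UNIV \<phi> x) 1" by (rule \<phi>(2))
      then show False using that x by simp
    qed
    then show ?thesis using E(3) x by simp
  qed
  then show ?thesis using that \<phi>(1) by blast
qed

lemma conjugate_commutation:
  assumes "bij p" "s \<circ> t = k \<circ> t \<circ> s"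
  shows "(inv_into UNIV p \<circ> s \<circ> p) \<circ> (inv_into UNIV p \<circ> t \<circ> p)
    = (inv_into UNIV p \<circ> k \<circ> p) \<circ> (inv_into UNIV p \<circ> t \<circ> p) \<circ> (inv_into UNIV p \<circ> s \<circ> p)"
proof -
  have "s (t y) = k (t (s y))" for y
    using assms(2) by (metis comp_apply)
  then show ?thesis
    using assms(1) by (simp add: fun_eq_iff bij_is_surj surj_f_inv_f)
qed

lemma commutation_imp_in_derived_RG:
  assumes "a \<in> rational_homeos" "b \<in> rational_homeos" "a \<circ> b = f \<circ> b \<circ> a"
  shows "f \<in> derived RG (carrier RG)"
proof -
  have "bij a" "bij b" using assms(1,2) rational_homeos_iff by blast+
  then have "b \<circ> a \<circ> inv_into UNIV a \<circ> inv_into UNIV b = id"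
    by (simp add: fun_eq_iff bij_is_surj surj_f_inv_f)
  then have "a \<circ> b \<circ> inv_into UNIV a \<circ> inv_into UNIV b = f"
    using assms(3) by (metis comp_assoc comp_id)
  then show ?thesis using commutator_in_derived_RG[OF assms(1,2)] by simp
qed

theorem lemma2p7:
  assumes "f \<in> rational_homeos" and "small_support f"
  shows "f \<in> derived RG (carrier RG)"
proof -
  obtain \<phi> where \<phi>: "\<phi> \<in> rational_homeos"
    and supported_10: "\<And>x. \<not> (x 0 \<and> \<not> x 1) \<Longrightarrow> (\<phi> \<circ> f \<circ> inv_into UNIV \<phi>) x = x"
    using small_support_conjugate_supported_in_10[OF assms] by blast
  let ?k = "\<phi> \<circ> f \<circ> inv_into UNIV \<phi>" and ?\<psi> = "inv_into UNIV \<phi>"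
  have k: "?k \<in> rational_homeos"
    using \<phi> assms(1) by (intro rational_homeos_comp rational_homeos_inv)
  have "bij \<phi>" using \<phi> rational_homeos_iff by blast
  then have f: "?\<psi> \<circ> ?k \<circ> \<phi> = f"
    by (simp add: fun_eq_iff bij_is_inj bij_is_surj surj_f_inv_f)
  have "?\<psi> \<circ> swindle ?k \<circ> \<phi> \<in> rational_homeos"
    by (intro rational_homeos_comp rational_homeos_inv \<phi> swindle_in_rational_homeos[OF k supported_10])
  moreover have "?\<psi> \<circ> thompson \<circ> \<phi> \<in> rational_homeos"
    by (intro rational_homeos_comp rational_homeos_inv \<phi> thompson_in_rational_homeos)
  moreover have "(?\<psi> \<circ> swindle ?k \<circ> \<phi>) \<circ> (?\<psi> \<circ> thompson \<circ> \<phi>)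
      = f \<circ> (?\<psi> \<circ> thompson \<circ> \<phi>) \<circ> (?\<psi> \<circ> swindle ?k \<circ> \<phi>)"
    using conjugate_commutation[OF \<open>bij \<phi>\<close> swindle_thompson_commute[OF k supported_10]] unfolding f .
  ultimately show ?thesis by (rule commutation_imp_in_derived_RG)
qed

end
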